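(* Let $\mathbb{K}$ be an algebraically closed field of characteristic zero, $X$ an irreducible affine variety over $\mathbb{K}$, and $U\subseteq X$ a principal open subset (i.e., $U=\{x\in X\mid h(x)\neq 0\}$ for some $h\in\mathbb{K}[X]$). Then for any $\mathbb{G}_a$-subgroup $H$ of $\mathrm{Aut}(U)$ there exists a $\mathbb{G}_a$-subgroup $H'$ of $\mathrm{Aut}(X)$ such that $Hx = H'x$ for every $x\in U$.
   Context: $\mathbb{G}_a=(\mathbb{K},+)$; a $\mathbb{G}_a$-subgroup of the automorphism group of a variety is the image of an effective regular $\mathbb{G}_a$-action on it. *)

theory Defs
  imports "HOL-Computational_Algebra.Polynomial"
begin

definition alg_closed :: "'a::field itself \<Rightarrow> bool" where
  "alg_closed _ \<longleftrightarrow> (\<forall>p::'a poly. degree p > 0 \<longrightarrow> (\<exists>x. poly p x = 0))"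

(* Polynomial functions K^V \<rightarrow> K, where points of affine space are functions V \<Rightarrow> K
   (V a finite variable type). *)
inductive_set polyfun :: "(('v \<Rightarrow> 'a::comm_ring_1) \<Rightarrow> 'a) set" where
  pf_const: "(\<lambda>x. c) \<in> polyfun"
| pf_var:   "(\<lambda>x. x v) \<in> polyfun"
| pf_add:   "p \<in> polyfun \<Longrightarrow> q \<in> polyfun \<Longrightarrow> (\<lambda>x. p x + q x) \<in> polyfun"
| pf_mult:  "p \<in> polyfun \<Longrightarrow> q \<in> polyfun \<Longrightarrow> (\<lambda>x. p x * q x) \<in> polyfun"

definition zariski_closed :: "('v \<Rightarrow> 'a::comm_ring_1) set \<Rightarrow> bool" where
  "zariski_closed Y \<longleftrightarrow> (\<exists>S \<subseteq> polyfun. Y = {x. \<forall>p\<in>S. p x = 0})"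

definition irreducible_affine_variety :: "('v \<Rightarrow> 'a::comm_ring_1) set \<Rightarrow> bool" where
  "irreducible_affine_variety X \<longleftrightarrow> zariski_closed X \<and> X \<noteq> {} \<and>
     (\<forall>Y Z. zariski_closed Y \<longrightarrow> zariski_closed Z \<longrightarrow> X \<subseteq> Y \<union> Z \<longrightarrow> X \<subseteq> Y \<or> X \<subseteq> Z)"

definition principal_open :: "('v \<Rightarrow> 'a::comm_ring_1) set \<Rightarrow> (('v \<Rightarrow> 'a) \<Rightarrow> 'a) \<Rightarrow> ('v \<Rightarrow> 'a) set" where
  "principal_open X h = {x \<in> X. h x \<noteq> 0}"

(* Regular functions on G_a \<times> U, where U = principal_open X h:
   the ring K[t] \<otimes> K[X]_h, i.e. functions (t,x) \<mapsto> (\<Sum>i\<le>d. q_i(x) t^i) / h(x)^k. *)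
definition regular_on_Ga_times :: "('v \<Rightarrow> 'a::field) set \<Rightarrow> (('v \<Rightarrow> 'a) \<Rightarrow> 'a)
     \<Rightarrow> ('a \<Rightarrow> ('v \<Rightarrow> 'a) \<Rightarrow> 'a) \<Rightarrow> bool" where
  "regular_on_Ga_times X h f \<longleftrightarrow>
     (\<exists>(d::nat) (k::nat) (q::nat \<Rightarrow> ('v \<Rightarrow> 'a) \<Rightarrow> 'a). (\<forall>i. q i \<in> polyfun) \<and>
        (\<forall>t. \<forall>x\<in>principal_open X h. f t x = (\<Sum>i\<le>d. q i x * t ^ i) / h x ^ k))"

(* An effective regular G_a-action on U = principal_open X h
   (its image in Aut(U) is a G_a-subgroup). *)
definition effective_Ga_action :: "('v \<Rightarrow> 'a::field) set \<Rightarrow> (('v \<Rightarrow> 'a) \<Rightarrow> 'a)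
     \<Rightarrow> ('a \<Rightarrow> ('v \<Rightarrow> 'a) \<Rightarrow> ('v \<Rightarrow> 'a)) \<Rightarrow> bool" where
  "effective_Ga_action X h A \<longleftrightarrow>
     (\<forall>t. \<forall>x\<in>principal_open X h. A t x \<in> principal_open X h) \<and>
     (\<forall>j. regular_on_Ga_times X h (\<lambda>t x. A t x j)) \<and>
     (\<forall>x\<in>principal_open X h. A 0 x = x) \<and>
     (\<forall>s t. \<forall>x\<in>principal_open X h. A (s + t) x = A s (A t x)) \<and>
     (\<forall>t. t \<noteq> 0 \<longrightarrow> (\<exists>x\<in>principal_open X h. A t x \<noteq> x))"

definition Ga_orbit :: "('a \<Rightarrow> 'b \<Rightarrow> 'b) \<Rightarrow> 'b \<Rightarrow> 'b set" where
  "Ga_orbit A x = {A t x | t. True}"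

end

theory Submission
  imports Defs
begin

text \<open>
  The orbit maps \<open>t \<mapsto> A t x\<close> of a regular \<open>G\<^sub>a\<close>-action on \<open>U = {h \<noteq> 0}\<close> are polynomial
  in \<open>t\<close>, so \<open>t \<mapsto> h (A t x)\<close> is a polynomial without zeros, hence constant because \<open>K\<close> is
  algebraically closed. Reparametrising time as \<open>A (h x ^ N * t) x\<close> therefore gives again a
  \<open>G\<^sub>a\<close>-action with the same orbits on \<open>U\<close>. If \<open>N\<close> exceeds the powers of \<open>h\<close> occurring in the
  denominators of \<open>A\<close>, all denominators cancel and the coefficients of \<open>t\<^sup>i\<close>, \<open>i > 0\<close>,
  vanish on \<open>{h = 0}\<close>, so the identity there extends the action regularly to \<open>X\<close>.
  Effectiveness survives because in characteristic zero a point fixed by one nonzero time is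
  fixed by infinitely many, hence by all.
\<close>

lemma polyfun_power: "h \<in> polyfun \<Longrightarrow> (\<lambda>x. h x ^ m) \<in> polyfun"
  by (induction m) (auto intro: pf_mult pf_const[of 1, simplified])

lemma polyfun_comp_range_poly:
  fixes F :: "'a::comm_ring_1 \<Rightarrow> 'v \<Rightarrow> 'a"
  assumes "p \<in> polyfun" and "\<And>v. (\<lambda>t. F t v) \<in> range poly"
  shows "(\<lambda>t. p (F t)) \<in> range poly"
  using assms(1)
proof induction
  case (pf_const c)
  show ?case by (rule range_eqI[of _ _ "[:c:]"]) auto
next
  case (pf_var v)
  show ?case using assms(2) .
next
  case (pf_add p q)
  then obtain P Q where "(\<lambda>t. p (F t)) = poly P" "(\<lambda>t. q (F t)) = poly Q" by blast
  then show ?case by (intro range_eqI[of _ _ "P + Q"]) (simp add: fun_eq_iff)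
next
  case (pf_mult p q)
  then obtain P Q where "(\<lambda>t. p (F t)) = poly P" "(\<lambda>t. q (F t)) = poly Q" by blast
  then show ?case by (intro range_eqI[of _ _ "P * Q"]) (simp add: fun_eq_iff)
qed

lemma poly_const_if_no_roots:
  assumes "alg_closed TYPE('a::field)" and "\<And>t. poly Q t \<noteq> (0::'a)"
  shows "poly Q s = poly Q t"
proof -
  have "degree Q = 0" using assms unfolding alg_closed_def by blast
  then obtain a where "Q = [:a:]" by (rule degree_eq_zeroE)
  then show ?thesis by simp
qed

definition regular_with_exponent :: "('v \<Rightarrow> 'a::field) set \<Rightarrow> (('v \<Rightarrow> 'a) \<Rightarrow> 'a) \<Rightarrow> nat
     \<Rightarrow> ('a \<Rightarrow> ('v \<Rightarrow> 'a) \<Rightarrow> 'a) \<Rightarrow> bool" where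
  "regular_with_exponent X h k f \<longleftrightarrow>
     (\<exists>(d::nat) (q::nat \<Rightarrow> ('v \<Rightarrow> 'a) \<Rightarrow> 'a). (\<forall>i. q i \<in> polyfun) \<and>
        (\<forall>t. \<forall>x\<in>principal_open X h. f t x = (\<Sum>i\<le>d. q i x * t ^ i) / h x ^ k))"

lemma regular_on_Ga_times_iff: "regular_on_Ga_times X h f \<longleftrightarrow> (\<exists>k. regular_with_exponent X h k f)"
  unfolding regular_on_Ga_times_def regular_with_exponent_def by blast

lemma regular_with_exponent_mono:
  assumes "h \<in> polyfun" and "regular_with_exponent X h k f" and "k \<le> k'"
  shows "regular_with_exponent X h k' f"
proof -
  obtain d q where q: "\<And>i. q i \<in> polyfun"
    and f: "\<And>t x. x \<in> principal_open X h \<Longrightarrow> f t x = (\<Sum>i\<le>d. q i x * t ^ i) / h x ^ k"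
    using assms(2) unfolding regular_with_exponent_def by blast
  have "f t x = (\<Sum>i\<le>d. q i x * h x ^ (k' - k) * t ^ i) / h x ^ k'"
    if "x \<in> principal_open X h" for t x
  proof -
    have "h x \<noteq> 0" using that by (simp add: principal_open_def)
    moreover have "h x ^ k' = h x ^ (k' - k) * h x ^ k"
      using assms(3) by (simp flip: power_add)
    moreover have "(\<Sum>i\<le>d. q i x * h x ^ (k' - k) * t ^ i)
        = h x ^ (k' - k) * (\<Sum>i\<le>d. q i x * t ^ i)"
      by (simp add: sum_distrib_left ac_simps)
    ultimately show ?thesis
      using f[OF that] by simp
  qed
  moreover have "(\<lambda>x. q i x * h x ^ (k' - k)) \<in> polyfun" for i
    using q assms(1) by (intro pf_mult polyfun_power)
  ultimately show ?thesis
    unfolding regular_with_exponent_def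
    by (auto intro!: exI[of _ d] exI[of _ "\<lambda>i x. q i x * h x ^ (k' - k)"])
qed

lemma regular_with_uniform_exponent:
  fixes f :: "'j::finite \<Rightarrow> 'a::field \<Rightarrow> ('v \<Rightarrow> 'a) \<Rightarrow> 'a"
  assumes "h \<in> polyfun" and "\<And>j. regular_on_Ga_times X h (f j)"
  shows "\<exists>k. \<forall>j. regular_with_exponent X h k (f j)"
proof -
  obtain K where "\<And>j. regular_with_exponent X h (K j) (f j)"
    using assms(2) unfolding regular_on_Ga_times_iff by metis
  then have "regular_with_exponent X h (Max (range K)) (f j)" for j
    by (rule regular_with_exponent_mono[OF assms(1)]) simp
  then show ?thesis by blast
qed

lemma regular_on_Ga_times_range_poly:
  assumes "regular_on_Ga_times X h f" and "x \<in> principal_open X h"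
  shows "(\<lambda>t. f t x) \<in> range poly"
proof -
  obtain d k q where "\<And>t. f t x = (\<Sum>i\<le>d. q i x * t ^ i) / h x ^ k"
    using assms unfolding regular_on_Ga_times_def by blast
  then show ?thesis
    by (intro range_eqI[of _ _ "smult (inverse (h x ^ k)) (\<Sum>i\<le>d. monom (q i x) i)"])
       (simp add: fun_eq_iff poly_sum poly_monom divide_inverse mult.commute)
qed

lemma effective_Ga_actionD:
  assumes "effective_Ga_action X h A" and "x \<in> principal_open X h"
  shows "A t x \<in> principal_open X h" and "A 0 x = x" and "A (s + t) x = A s (A t x)"
    and "(\<lambda>t. A t x j) \<in> range poly"
  using assms regular_on_Ga_times_range_poly[of X h "\<lambda>t x. A t x j"]
  unfolding effective_Ga_action_def by auto

lemma Ga_action_invariant: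
  fixes A :: "'a::field \<Rightarrow> ('v \<Rightarrow> 'a) \<Rightarrow> ('v \<Rightarrow> 'a)"
  assumes "alg_closed TYPE('a)" and "h \<in> polyfun"
    and A: "effective_Ga_action X h A" and x: "x \<in> principal_open X h"
  shows "h (A t x) = h x"
proof -
  have "(\<lambda>t. h (A t x)) \<in> range poly"
    by (rule polyfun_comp_range_poly[OF assms(2) effective_Ga_actionD(4)[OF A x]])
  then obtain Q where Q: "\<And>t. h (A t x) = poly Q t" by (metis rangeE)
  have "poly Q s \<noteq> 0" for s
    using effective_Ga_actionD(1)[OF A x, of s] Q[of s] by (simp add: principal_open_def)
  then have "poly Q t = poly Q 0" by (rule poly_const_if_no_roots[OF assms(1)])
  then show ?thesis
    using Q[of t] Q[of 0] effective_Ga_actionD(2)[OF A x] by simp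
qed

lemma Ga_action_fixed_if_fixed_by_nonzero:
  fixes A :: "'a::field_char_0 \<Rightarrow> ('v \<Rightarrow> 'a) \<Rightarrow> ('v \<Rightarrow> 'a)"
  assumes A: "effective_Ga_action X h A" and x: "x \<in> principal_open X h"
    and "c \<noteq> 0" and "A c x = x"
  shows "A s x = x"
proof
  fix j
  have multiples: "A (of_nat n * c) x = x" for n
  proof (induction n)
    case 0
    then show ?case using effective_Ga_actionD(2)[OF A x] by simp
  next
    case (Suc n)
    have "of_nat (Suc n) * c = c + of_nat n * c" by (simp add: algebra_simps)
    then show ?case
      using effective_Ga_actionD(3)[OF A x, of c "of_nat n * c"] Suc \<open>A c x = x\<close> by simp
  qed
  obtain Q where Q: "\<And>t. A t x j = poly Q t"
    using effective_Ga_actionD(4)[OF A x] by (metis rangeE)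
  have "poly Q (of_nat n * c) = x j" for n
    using Q[of "of_nat n * c"] multiples[of n] by simp
  then have "range (\<lambda>n::nat. of_nat n * c) \<subseteq> {t. poly (Q - [:x j:]) t = 0}"
    by auto
  moreover have "infinite (range (\<lambda>n::nat. of_nat n * c))"
    using \<open>c \<noteq> 0\<close> by (auto intro!: range_inj_infinite injI)
  ultimately have "Q = [:x j:]"
    using poly_roots_finite[of "Q - [:x j:]"] finite_subset by auto
  then show "A s x j = x j" using Q by simp
qed

definition rescaled_Ga_action :: "(('v \<Rightarrow> 'a::field) \<Rightarrow> 'a) \<Rightarrow> nat
     \<Rightarrow> ('a \<Rightarrow> ('v \<Rightarrow> 'a) \<Rightarrow> ('v \<Rightarrow> 'a)) \<Rightarrow> 'a \<Rightarrow> ('v \<Rightarrow> 'a) \<Rightarrow> ('v \<Rightarrow> 'a)" where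
  "rescaled_Ga_action h N A t x = (if h x = 0 then x else A (h x ^ N * t) x)"

lemma Ga_orbit_rescaled:
  assumes "h x \<noteq> 0"
  shows "Ga_orbit (rescaled_Ga_action h N A) x = Ga_orbit A x"
proof -
  have "A t x = A (h x ^ N * (t / h x ^ N)) x" for t using assms by simp
  then have "A t x \<in> {A (h x ^ N * s) x | s. True}" for t by blast
  then show ?thesis
    using assms unfolding Ga_orbit_def rescaled_Ga_action_def by auto
qed

lemma rescaled_Ga_action_add:
  fixes A :: "'a::field \<Rightarrow> ('v \<Rightarrow> 'a) \<Rightarrow> ('v \<Rightarrow> 'a)"
  assumes "alg_closed TYPE('a)" and "h \<in> polyfun"
    and A: "effective_Ga_action X h A" and "x \<in> X"
  shows "rescaled_Ga_action h N A (s + t) x = rescaled_Ga_action h N A s (rescaled_Ga_action h N A t x)"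
proof (cases "h x = 0")
  case False
  then have x: "x \<in> principal_open X h" using \<open>x \<in> X\<close> by (simp add: principal_open_def)
  have "h (A (h x ^ N * t) x) = h x" by (rule Ga_action_invariant[OF assms(1,2) A x])
  moreover have "A (h x ^ N * s + h x ^ N * t) x = A (h x ^ N * s) (A (h x ^ N * t) x)"
    by (rule effective_Ga_actionD(3)[OF A x])
  ultimately show ?thesis
    using False by (simp add: rescaled_Ga_action_def distrib_left)
qed (simp add: rescaled_Ga_action_def)

lemma regular_rescaled:
  assumes "h \<in> polyfun" and "regular_with_exponent X h k f"
    and f0: "\<And>x. x \<in> principal_open X h \<Longrightarrow> f 0 x = g x" and "g \<in> polyfun" and "k < N"
  shows "regular_on_Ga_times X (\<lambda>_. 1) (\<lambda>t x. if h x = 0 then g x else f (h x ^ N * t) x)"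
proof -
  obtain d q where q: "\<And>i. q i \<in> polyfun"
    and f: "\<And>t x. x \<in> principal_open X h \<Longrightarrow> f t x = (\<Sum>i\<le>d. q i x * t ^ i) / h x ^ k"
    using assms(2) unfolding regular_with_exponent_def by blast
  define q' where "q' i = (if i = 0 then g else (\<lambda>x. q i x * h x ^ (N * i - k)))" for i
  have "q' i \<in> polyfun" for i
    using q assms(1,4) by (simp add: q'_def pf_mult polyfun_power)
  moreover have "(if h x = 0 then g x else f (h x ^ N * t) x) = (\<Sum>i\<le>d. q' i x * t ^ i)"
    if "x \<in> X" for t x
  proof (cases "h x = 0")
    case True
    have "q' i x * t ^ i = (if i = 0 then g x else 0)" for i
    proof -
      have "N * i - k > 0" if "i > 0" using that \<open>k < N\<close> by (simp add: less_le_trans)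
      then show ?thesis using True by (simp add: q'_def)
    qed
    then show ?thesis using True by simp
  next
    case False
    then have x: "x \<in> principal_open X h" using that by (simp add: principal_open_def)
    have "q i x * (h x ^ N * t) ^ i / h x ^ k = q' i x * t ^ i" for i
    proof (cases "i = 0")
      case True
      then show ?thesis using f[OF x, of 0] f0[OF x] by (simp add: q'_def)
    next
      case i: False
      have "k \<le> N * i" using i \<open>k < N\<close> by (simp add: less_le_trans less_imp_le)
      then have "h x ^ (N * i) = h x ^ (N * i - k) * h x ^ k"
        by (simp flip: power_add)
      then show ?thesis
        using i False by (simp add: q'_def power_mult_distrib power_mult)
    qed
    then show ?thesis
      using False f[OF x] by (simp add: sum_divide_distrib)
  qed
  ultimately show ?thesis
    unfolding regular_on_Ga_times_def principal_open_def by auto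
qed

lemma effective_Ga_action_rescaled:
  fixes A :: "'a::field_char_0 \<Rightarrow> ('v \<Rightarrow> 'a) \<Rightarrow> ('v \<Rightarrow> 'a)"
  assumes "alg_closed TYPE('a)" and "h \<in> polyfun" and A: "effective_Ga_action X h A"
    and k: "\<And>j. regular_with_exponent X h k (\<lambda>t x. A t x j)" and "k < N"
  shows "effective_Ga_action X (\<lambda>_. 1) (rescaled_Ga_action h N A)"
  unfolding effective_Ga_action_def
proof (intro conjI allI ballI impI)
  let ?A' = "rescaled_Ga_action h N A"
  have U: "principal_open X h = {x \<in> X. h x \<noteq> 0}" "principal_open X (\<lambda>_. 1) = X"
    by (simp_all add: principal_open_def)
  show "?A' t x \<in> principal_open X (\<lambda>_. 1)" if "x \<in> principal_open X (\<lambda>_. 1)" for t x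
    using that effective_Ga_actionD(1)[OF A] by (auto simp: rescaled_Ga_action_def U)
  show "?A' 0 x = x" if "x \<in> principal_open X (\<lambda>_. 1)" for x
    using that effective_Ga_actionD(2)[OF A] by (auto simp: rescaled_Ga_action_def U)
  show "?A' (s + t) x = ?A' s (?A' t x)" if "x \<in> principal_open X (\<lambda>_. 1)" for s t x
    using that by (simp add: U rescaled_Ga_action_add[OF assms(1,2) A])
  show "regular_on_Ga_times X (\<lambda>_. 1) (\<lambda>t x. ?A' t x j)" for j
  proof -
    have "regular_on_Ga_times X (\<lambda>_. 1) (\<lambda>t x. if h x = 0 then x j else A (h x ^ N * t) x j)"
      by (rule regular_rescaled[OF assms(2) k _ pf_var \<open>k < N\<close>])
        (simp add: effective_Ga_actionD(2)[OF A])
    moreover have "(\<lambda>t x. ?A' t x j) = (\<lambda>t x. if h x = 0 then x j else A (h x ^ N * t) x j)"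
      by (simp add: fun_eq_iff rescaled_Ga_action_def)
    ultimately show ?thesis by simp
  qed
  show "\<exists>x\<in>principal_open X (\<lambda>_. 1). ?A' t x \<noteq> x" if "t \<noteq> 0" for t
  proof -
    have "\<exists>x\<in>principal_open X h. A 1 x \<noteq> x"
      using A by (simp add: effective_Ga_action_def)
    then obtain x where x: "x \<in> principal_open X h" and moved: "A 1 x \<noteq> x" by blast
    have "h x ^ N * t \<noteq> 0" using x that by (simp add: U)
    then have "A (h x ^ N * t) x \<noteq> x"
      using Ga_action_fixed_if_fixed_by_nonzero[OF A x] moved by blast
    then show ?thesis using x by (auto simp: rescaled_Ga_action_def U)
  qed
qed

theorem proposition4:
  fixes X :: "('n::finite \<Rightarrow> 'a::field_char_0) set"
    and h :: "('n \<Rightarrow> 'a) \<Rightarrow> 'a"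
    and A :: "'a \<Rightarrow> ('n \<Rightarrow> 'a) \<Rightarrow> ('n \<Rightarrow> 'a)"
  assumes "alg_closed TYPE('a)"
    and "irreducible_affine_variety X"
    and "h \<in> polyfun"
    and "effective_Ga_action X h A"
  shows "\<exists>A'. effective_Ga_action X (\<lambda>_. 1) A' \<and>
           (\<forall>x\<in>principal_open X h. Ga_orbit A x = Ga_orbit A' x)"
proof -
  obtain k where k: "\<And>j. regular_with_exponent X h k (\<lambda>t x. A t x j)"
    using regular_with_uniform_exponent[OF assms(3), of X "\<lambda>j t x. A t x j"] assms(4)
    unfolding effective_Ga_action_def by blast
  have "effective_Ga_action X (\<lambda>_. 1) (rescaled_Ga_action h (Suc k) A)"
    by (rule effective_Ga_action_rescaled[OF assms(1,3,4) k lessI])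
  moreover have "Ga_orbit A x = Ga_orbit (rescaled_Ga_action h (Suc k) A) x"
    if "x \<in> principal_open X h" for x
    using that by (simp add: principal_open_def Ga_orbit_rescaled)
  ultimately show ?thesis by blast
qed

end
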